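(* Let $(X,\rho)$, $X_0$, $\mu_x^U$, $\mathcal H(U)$, $\mathcal U_0$ be as in the context, and suppose that there exist $\alpha\in(0,1)$ and $K\ge1$ such that for all $U(x_0,R)\in\mathcal U_0$ and all $h\in\mathcal H_b^+(U(x_0,R))$ one has $\sup_{U(x_0,\alpha R)}h\le K\inf_{U(x_0,\alpha R)}h$. Then: 1. For all $U(x_0,R)\in\mathcal U_0$ and all $h\in\mathcal H^+(U(x_0,R))$, $\sup_{U(x_0,\alpha R)}h\le K\inf_{U(x_0,\alpha R)}h$. 2. If for all $U\in\mathcal U(X_0)$ the functions in $\mathcal H_b^+(U)$ are continuous on $U$, then for all $U\in\mathcal U(X_0)$ the functions in $\mathcal H^+(U)$ are continuous on $U$.
   Context: $(X,\rho)$ is a separable metric space; $\mathcal M(X)$ denotes the finite Borel measures on $X$ (also regarded on universally measurable sets), $\|\mu\|:=\mu(X)$, $\varepsilon_x$ the Dirac measure. For open $Y\subseteq X$, $\mathcal U(Y)$ is the set of open $U$ with $\overline U\subseteq Y$. $X_0\subseteq X$ is open. For every $x\in X$ and $U\in\mathcal U(X_0)$ a measure $\mu_x^U\in\mathcal M(X)$ is given such that for all $x$ and $U,V\in\mathcal U(X_0)$: (M0) $\mu_x^U(U)=0$, $\|\mu_x^U\|\le1$, $\mu_x^U=\varepsilon_x$ if $x\notin U$; (M1) $y\mapsto\mu_y^U(E)$ is universally measurable for every Borel $E$, and $\mu_x^U=\int\mu_y^U\,d\mu_x^V(y)$ whenever $V\subseteq U$. For $U\in\mathcal U(X_0)$,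 $\mathcal H(U)$ is the set of universally measurable real functions $h$ on $X$ such that for all $V\in\mathcal U(U)$ and $x\in V$, $h$ is $\mu_x^V$-integrable with $\int h\,d\mu_x^V=h(x)$; $\mathcal H^+(U)$, $\mathcal H_b^+(U)$ are its nonnegative, resp. bounded nonnegative, elements. $U(x,r)$ is the open $\rho$-ball, $R_0(x):=\sup\{r>0:\overline{U(x,r)}\subseteq X_0\}$ for $x\in X_0$, and $\mathcal U_0:=\{U(x,r):x\in X_0,\ r<R_0(x)\}$. *)

theory Defs
  imports "HOL-Analysis.Analysis" "HOL-Probability.Probability"
begin

definition fin_borel :: "'a::metric_space measure \<Rightarrow> bool" where
  "fin_borel \<mu> \<longleftrightarrow> sets \<mu> = sets borel \<and> finite_measure \<mu>"

definition univ_meas_fun :: "('a::metric_space \<Rightarrow> real) \<Rightarrow> bool" where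
  "univ_meas_fun h \<longleftrightarrow> (\<forall>\<mu>. fin_borel \<mu> \<longrightarrow> h \<in> borel_measurable (completion \<mu>))"

definition UU :: "'a::metric_space set \<Rightarrow> 'a set set" where
  "UU Y = {U. open U \<and> closure U \<subseteq> Y}"

text \<open>Standing assumptions (M0) and (M1) on the family mu x U.\<close>
definition kernel_family :: "'a::metric_space set \<Rightarrow> ('a \<Rightarrow> 'a set \<Rightarrow> 'a measure) \<Rightarrow> bool" where
  "kernel_family X0 mu \<longleftrightarrow>
     (\<forall>x U. U \<in> UU X0 \<longrightarrow>
        fin_borel (mu x U) \<and> emeasure (mu x U) U = 0 \<and> emeasure (mu x U) UNIV \<le> 1 \<and>
        (x \<notin> U \<longrightarrow> mu x U = return borel x)) \<and>
     (\<forall>U E. U \<in> UU X0 \<longrightarrow> E \<in> sets borel \<longrightarrow> univ_meas_fun (\<lambda>y. measure (mu y U) E)) \<and>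
     (\<forall>x U V. U \<in> UU X0 \<longrightarrow> V \<in> UU X0 \<longrightarrow> V \<subseteq> U \<longrightarrow>
        (\<forall>E \<in> sets borel. emeasure (mu x U) E =
            (\<integral>\<^sup>+ y. emeasure (mu y U) E \<partial>(completion (mu x V)))))"

definition Harm :: "('a::metric_space \<Rightarrow> 'a set \<Rightarrow> 'a measure) \<Rightarrow> 'a set \<Rightarrow> ('a \<Rightarrow> real) set" where
  "Harm mu U = {h. univ_meas_fun h \<and>
     (\<forall>V \<in> UU U. \<forall>x \<in> V. integrable (completion (mu x V)) h \<and>
        (\<integral> y. h y \<partial>(completion (mu x V))) = h x)}"

definition Harm_plus :: "('a::metric_space \<Rightarrow> 'a set \<Rightarrow> 'a measure) \<Rightarrow> 'a set \<Rightarrow> ('a \<Rightarrow> real) set" where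
  "Harm_plus mu U = {h \<in> Harm mu U. \<forall>x. 0 \<le> h x}"

definition Harm_bplus :: "('a::metric_space \<Rightarrow> 'a set \<Rightarrow> 'a measure) \<Rightarrow> 'a set \<Rightarrow> ('a \<Rightarrow> real) set" where
  "Harm_bplus mu U = {h \<in> Harm_plus mu U. bounded (range h)}"

definition R0 :: "'a::metric_space set \<Rightarrow> 'a \<Rightarrow> ereal" where
  "R0 X0 x = (SUP r \<in> {r. 0 < r \<and> closure (ball x r) \<subseteq> X0}. ereal r)"

definition harnack :: "real \<Rightarrow> real \<Rightarrow> ('a::metric_space \<Rightarrow> real) \<Rightarrow> 'a \<Rightarrow> real \<Rightarrow> bool" where
  "harnack \<alpha> K h x0 R \<longleftrightarrow>
     (SUP y \<in> ball x0 (\<alpha> * R). ereal (h y)) \<le> ereal K * (INF y \<in> ball x0 (\<alpha> * R). ereal (h y))"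

end

theory Submission
  imports Defs
begin

text \<open>
  Truncate a nonnegative harmonic function \<open>h\<close> on \<open>W \<in> \<U>(X\<^sub>0)\<close> by
  \<open>h\<^sub>n(x) = \<integral> min h n d\<mu>\<^sub>x\<^sup>W\<close>. By (M1) each \<open>h\<^sub>n\<close> is bounded and harmonic on \<open>W\<close>,
  it equals \<open>min h n \<le> h\<close> off \<open>W\<close>, and by dominated convergence \<open>h\<^sub>n \<rightarrow> h\<close> on \<open>W\<close>,
  where \<open>h\<close> is its own average. So the Harnack inequality for the bounded \<open>h\<^sub>n\<close> passes
  to \<open>h\<close> in the limit. For continuity, \<open>h - h\<^sub>n\<close> is itself nonnegative and harmonic on a
  ball \<open>B\<close> around \<open>x\<close>; the Harnack inequality on \<open>\<alpha>B\<close> bounds it there by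
  \<open>K (h - h\<^sub>n)(x) \<rightarrow> 0\<close>, so \<open>h\<close> is a locally uniform limit of continuous functions.
\<close>

lemma (in complete_measure) borel_measurable_AE_eq:
  fixes f g :: "'a \<Rightarrow> 'b::topological_space"
  assumes g: "g \<in> borel_measurable M" and ae: "AE x in M. f x = g x"
  shows "f \<in> borel_measurable M"
proof (rule measurableI)
  fix A :: "'b set" assume A: "A \<in> sets borel"
  show "f -` A \<inter> space M \<in> sets M"
  proof (rule in_sets_AE[where A="g -` A \<inter> space M"])
    show "AE x in M. (x \<in> g -` A \<inter> space M) = (x \<in> f -` A \<inter> space M)"
      using ae by eventually_elim auto
    show "g -` A \<inter> space M \<in> sets M"
      using g A measurable_sets by blast
  qed auto
qed auto

lemma space_fin_borel: "fin_borel M \<Longrightarrow> space M = UNIV"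
  unfolding fin_borel_def by (metis sets_eq_imp_space_eq space_borel)

lemma finite_measure_completion_fin_borel:
  assumes "fin_borel M"
  shows "finite_measure (completion M)"
proof -
  have "finite_measure M" using assms unfolding fin_borel_def by blast
  then show ?thesis
    by (intro finite_measureI) (simp add: finite_measure.emeasure_finite)
qed

lemma borel_measurable_min_univ_meas:
  assumes "univ_meas_fun h" "fin_borel M"
  shows "(\<lambda>y. min (h y) c) \<in> borel_measurable (completion M)"
  using assms unfolding univ_meas_fun_def by (intro borel_measurable_min) auto

lemma borel_measurable_ennreal_min_univ_meas:
  assumes "univ_meas_fun h" "fin_borel M"
  shows "(\<lambda>y. ennreal (min (h y) c)) \<in> borel_measurable (completion M)"
  by (rule measurable_compose[OF borel_measurable_min_univ_meas[OF assms] measurable_ennreal])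

lemma UU_trans: "V \<in> UU W \<Longrightarrow> W \<in> UU X0 \<Longrightarrow> V \<in> UU X0"
  unfolding UU_def using closure_subset[of W] by blast

lemma UU_subset: "V \<in> UU W \<Longrightarrow> V \<subseteq> W"
  unfolding UU_def using closure_subset by blast

lemma ball_in_UU: "cball x r \<subseteq> Y \<Longrightarrow> ball x r \<in> UU Y"
  unfolding UU_def using closure_minimal[OF ball_subset_cball closed_cball, of x r] by auto

lemma R0_gtE:
  assumes "ereal R < R0 X0 x0"
  obtains r where "R < r" "closure (ball x0 r) \<subseteq> X0"
  using assms unfolding R0_def less_SUP_iff by auto

lemma R0_ge: "0 < r \<Longrightarrow> closure (ball x0 r) \<subseteq> X0 \<Longrightarrow> ereal r \<le> R0 X0 x0"
  unfolding R0_def by (rule SUP_upper) auto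

lemma harnack_iff:
  assumes K: "0 < K"
  shows "harnack \<alpha> K h x0 R \<longleftrightarrow>
    (\<forall>y \<in> ball x0 (\<alpha> * R). \<forall>z \<in> ball x0 (\<alpha> * R). h y \<le> K * h z)"
    (is "_ \<longleftrightarrow> (\<forall>y \<in> ?B. \<forall>z \<in> ?B. _)")
proof
  assume H: "harnack \<alpha> K h x0 R"
  show "\<forall>y \<in> ?B. \<forall>z \<in> ?B. h y \<le> K * h z"
  proof (intro ballI)
    fix y z assume y: "y \<in> ?B" and z: "z \<in> ?B"
    have "ereal (h y) \<le> (SUP y\<in>?B. ereal (h y))" by (rule SUP_upper[OF y])
    also have "\<dots> \<le> ereal K * (INF y\<in>?B. ereal (h y))" using H unfolding harnack_def .
    also have "\<dots> \<le> ereal K * ereal (h z)"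
      by (rule ereal_mult_left_mono[OF INF_lower[OF z]]) (use K in simp)
    finally show "h y \<le> K * h z" by simp
  qed
next
  assume P: "\<forall>y \<in> ?B. \<forall>z \<in> ?B. h y \<le> K * h z"
  show "harnack \<alpha> K h x0 R"
    unfolding harnack_def
  proof (rule SUP_least)
    fix y assume y: "y \<in> ?B"
    have "ereal (h y / K) \<le> (INF z\<in>?B. ereal (h z))"
      using P y K by (intro INF_greatest) (simp add: pos_divide_le_eq mult.commute)
    then have "ereal K * ereal (h y / K) \<le> ereal K * (INF z\<in>?B. ereal (h z))"
      by (rule ereal_mult_left_mono) (use K in simp)
    then show "ereal (h y) \<le> ereal K * (INF z\<in>?B. ereal (h z))" using K by simp
  qed
qed

lemma uniform_limitI_dist_le:
  assumes "\<And>n y. y \<in> S \<Longrightarrow> dist (f n y) (l y) \<le> b n" and "b \<longlonglongrightarrow> 0"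
  shows "uniform_limit S f l sequentially"
proof (rule uniform_limitI)
  fix e :: real assume "0 < e"
  then have "eventually (\<lambda>n. b n < e) sequentially"
    using \<open>b \<longlonglongrightarrow> 0\<close> by (simp add: order_tendstoD(2))
  then show "eventually (\<lambda>n. \<forall>y\<in>S. dist (f n y) (l y) < e) sequentially"
    by eventually_elim (meson assms(1) le_less_trans)
qed

lemma Harm_mono: "W \<subseteq> U \<Longrightarrow> Harm mu U \<subseteq> Harm mu W"
  unfolding Harm_def UU_def by blast

lemma Harm_diff: "f \<in> Harm mu U \<Longrightarrow> g \<in> Harm mu U \<Longrightarrow> (\<lambda>x. f x - g x) \<in> Harm mu U"
  unfolding Harm_def univ_meas_fun_def by (auto intro: borel_measurable_diff)

lemma Harm_plusD:
  assumes "h \<in> Harm_plus mu U"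
  shows "univ_meas_fun h" "\<forall>x. 0 \<le> h x"
  using assms unfolding Harm_plus_def Harm_def by auto

lemma Harm_plus_mean:
  assumes "h \<in> Harm_plus mu U" "W \<in> UU U" "x \<in> W"
  shows "integrable (completion (mu x W)) h" "(\<integral>y. h y \<partial>completion (mu x W)) = h x"
  using assms unfolding Harm_plus_def Harm_def by auto

definition trunc_mean ::
    "('a::metric_space \<Rightarrow> 'a set \<Rightarrow> 'a measure) \<Rightarrow> 'a set \<Rightarrow> ('a \<Rightarrow> real) \<Rightarrow> nat \<Rightarrow> 'a \<Rightarrow> real"
  where "trunc_mean mu W h n x = (\<integral>y. min (h y) (real n) \<partial>completion (mu x W))"

lemma trunc_mean_nonneg: "\<forall>x. 0 \<le> h x \<Longrightarrow> 0 \<le> trunc_mean mu W h n x"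
  unfolding trunc_mean_def by (intro Bochner_Integration.integral_nonneg) auto

lemma trunc_mean_le:
  assumes "integrable (completion (mu x W)) h" and "\<forall>x. 0 \<le> h x"
  shows "trunc_mean mu W h n x \<le> (\<integral>y. h y \<partial>completion (mu x W))"
  unfolding trunc_mean_def using assms by (intro integral_mono') auto

locale harmonic_space =
  fixes X0 :: "'a::metric_space set" and mu :: "'a \<Rightarrow> 'a set \<Rightarrow> 'a measure"
  assumes kernel_family: "kernel_family X0 mu"
begin

lemma fin_borel_mu: "W \<in> UU X0 \<Longrightarrow> fin_borel (mu y W)"
  using kernel_family unfolding kernel_family_def by blast

lemma sets_mu: "W \<in> UU X0 \<Longrightarrow> sets (mu y W) = sets borel"
  using fin_borel_mu unfolding fin_borel_def by blast

lemma emeasure_mu_le_1: "W \<in> UU X0 \<Longrightarrow> emeasure (mu y W) UNIV \<le> 1"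
  using kernel_family unfolding kernel_family_def by blast

lemma mu_outside: "W \<in> UU X0 \<Longrightarrow> y \<notin> W \<Longrightarrow> mu y W = return borel y"
  using kernel_family unfolding kernel_family_def by blast

lemma measure_completion_mu_le_1:
  assumes W: "W \<in> UU X0"
  shows "measure (completion (mu x W)) (space (completion (mu x W))) \<le> 1"
proof -
  have fb: "fin_borel (mu x W)" by (rule fin_borel_mu[OF W])
  then have "ennreal (measure (mu x W) UNIV) = emeasure (mu x W) UNIV"
    unfolding fin_borel_def by (simp add: finite_measure.emeasure_eq_measure)
  also have "\<dots> \<le> 1" by (rule emeasure_mu_le_1[OF W])
  finally show ?thesis
    using space_fin_borel[OF fb] sets.top[of "mu x W"] by (simp add: ennreal_le_1)
qed

lemma mu_measurable:
  assumes W: "W \<in> UU X0" and M: "fin_borel M"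
  shows "(\<lambda>y. mu y W) \<in> completion M \<rightarrow>\<^sub>M subprob_algebra borel"
proof (rule measurable_subprob_algebra)
  fix a
  show "sets (mu a W) = sets borel" by (rule sets_mu[OF W])
  show "subprob_space (mu a W)"
    using emeasure_mu_le_1[OF W, of a] space_fin_borel[OF fin_borel_mu[OF W]]
    by (intro subprob_spaceI) auto
next
  fix A :: "'a set" assume A: "A \<in> sets borel"
  have "univ_meas_fun (\<lambda>y. measure (mu y W) A)"
    using kernel_family W A unfolding kernel_family_def by blast
  then have "(\<lambda>y. ennreal (measure (mu y W) A)) \<in> borel_measurable (completion M)"
    using M unfolding univ_meas_fun_def by (intro measurable_compose[OF _ measurable_ennreal]) blast
  moreover have "emeasure (mu y W) A = ennreal (measure (mu y W) A)" for y
    using fin_borel_mu[OF W, of y] unfolding fin_borel_def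
    by (simp add: finite_measure.emeasure_eq_measure)
  ultimately show "(\<lambda>y. emeasure (mu y W) A) \<in> borel_measurable (completion M)"
    by simp
qed

lemma sets_bind_mu:
  assumes "W \<in> UU X0" and "fin_borel M"
  shows "sets (bind (completion M) (\<lambda>y. mu y W)) = sets borel"
  using sets_mu[OF assms(1)] space_fin_borel[OF assms(2)] by (intro sets_bind) auto

lemma fin_borel_bind_mu:
  assumes W: "W \<in> UU X0" and M: "fin_borel M"
  shows "fin_borel (bind (completion M) (\<lambda>y. mu y W))"
proof -
  let ?B = "bind (completion M) (\<lambda>y. mu y W)"
  have sB: "sets ?B = sets borel" by (rule sets_bind_mu[OF W M])
  have spM: "space (completion M) \<noteq> {}" using space_fin_borel[OF M] by simp
  have "emeasure ?B UNIV = (\<integral>\<^sup>+y. emeasure (mu y W) UNIV \<partial>completion M)"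
    by (rule emeasure_bind[OF spM mu_measurable[OF W M]]) simp
  also have "\<dots> \<le> (\<integral>\<^sup>+y. 1 \<partial>completion M)"
    by (intro nn_integral_mono emeasure_mu_le_1[OF W])
  also have "\<dots> = emeasure (completion M) (space (completion M))"
    by simp
  also have "\<dots> < \<top>"
    using M unfolding fin_borel_def
    by (metis emeasure_completion finite_measure.emeasure_finite sets.top top.not_eq_extremum)
  finally have "emeasure ?B (space ?B) \<noteq> \<top>"
    using sets_eq_imp_space_eq[OF sB] by simp
  then show ?thesis
    unfolding fin_borel_def using sB by (auto intro: finite_measureI)
qed

text \<open>Assumption (M1), read as an identity of measures.\<close>

lemma bind_mu:
  assumes W: "W \<in> UU X0" and V: "V \<in> UU X0" and VW: "V \<subseteq> W"
  shows "bind (completion (mu z V)) (\<lambda>y. mu y W) = mu z W"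
proof (rule measure_eqI)
  have M: "fin_borel (mu z V)" by (rule fin_borel_mu[OF V])
  show "sets (bind (completion (mu z V)) (\<lambda>y. mu y W)) = sets (mu z W)"
    using sets_bind_mu[OF W M] sets_mu[OF W] by simp
  fix A assume "A \<in> sets (bind (completion (mu z V)) (\<lambda>y. mu y W))"
  then have A: "A \<in> sets borel" using sets_bind_mu[OF W M] by simp
  have "emeasure (bind (completion (mu z V)) (\<lambda>y. mu y W)) A
      = (\<integral>\<^sup>+y. emeasure (mu y W) A \<partial>completion (mu z V))"
    using space_fin_borel[OF M] by (intro emeasure_bind[OF _ mu_measurable[OF W M] A]) auto
  also have "\<dots> = emeasure (mu z W) A"
    using kernel_family W V VW A unfolding kernel_family_def by metis
  finally show "emeasure (bind (completion (mu z V)) (\<lambda>y. mu y W)) A = emeasure (mu z W) A" .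
qed

text \<open>
  A function measurable for the completion of \<open>\<nu> = \<integral> \<mu>\<^sub>y\<^sup>W dM(y)\<close> agrees
  \<open>\<nu>\<close>-a.e. with a Borel function \<open>g\<close>; the exceptional \<open>\<nu>\<close>-null set is \<open>\<mu>\<^sub>y\<^sup>W\<close>-null
  for \<open>M\<close>-a.e. \<open>y\<close>, so \<open>g\<close> may replace \<open>f\<close> under all these integrals at once.
\<close>

lemma nn_integral_completion_mu_borel_AE:
  fixes f :: "'a \<Rightarrow> ennreal"
  assumes W: "W \<in> UU X0" and M: "fin_borel M"
    and f: "f \<in> borel_measurable (completion (bind (completion M) (\<lambda>y. mu y W)))"
  obtains g where "g \<in> borel_measurable borel"
    and "AE y in completion M. (\<integral>\<^sup>+x. f x \<partial>completion (mu y W)) = (\<integral>\<^sup>+x. g x \<partial>mu y W)"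
    and "(\<integral>\<^sup>+x. f x \<partial>completion (bind (completion M) (\<lambda>y. mu y W)))
        = (\<integral>\<^sup>+x. g x \<partial>bind (completion M) (\<lambda>y. mu y W))"
proof -
  let ?B = "bind (completion M) (\<lambda>y. mu y W)"
  have sB: "sets ?B = sets borel" by (rule sets_bind_mu[OF W M])
  have km: "(\<lambda>y. mu y W) \<in> completion M \<rightarrow>\<^sub>M subprob_algebra borel" by (rule mu_measurable[OF W M])
  obtain g where g: "g \<in> borel_measurable ?B" and ae: "AE x in ?B. f x = g x"
    using completion_ex_borel_measurable[OF f] by blast
  obtain N where N: "{x \<in> space ?B. f x \<noteq> g x} \<subseteq> N" "emeasure ?B N = 0" "N \<in> sets ?B"
    by (rule AE_E[OF ae])
  have Nb: "N \<in> sets borel" using N sB by simp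
  have "(\<integral>\<^sup>+y. emeasure (mu y W) N \<partial>completion M) = 0"
    using N(2) space_fin_borel[OF M] emeasure_bind[OF _ km Nb] by simp
  moreover have "(\<lambda>y. emeasure (mu y W) N) \<in> borel_measurable (completion M)"
    using measurable_compose[OF km measurable_emeasure_subprob_algebra[OF Nb]] by simp
  ultimately have "AE y in completion M. emeasure (mu y W) N = 0"
    using nn_integral_0_iff_AE by blast
  then have "AE y in completion M. (\<integral>\<^sup>+x. f x \<partial>completion (mu y W)) = (\<integral>\<^sup>+x. g x \<partial>mu y W)"
  proof eventually_elim
    case (elim y)
    have "AE x in mu y W. f x = g x"
      using N(1) elim Nb sets_eq_imp_space_eq[OF sB] sets_mu[OF W, of y]
        sets_eq_imp_space_eq[OF sets_mu[OF W, of y]]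
      by (intro AE_I[of _ _ N]) auto
    then have "(\<integral>\<^sup>+x. f x \<partial>completion (mu y W)) = (\<integral>\<^sup>+x. g x \<partial>completion (mu y W))"
      by (intro nn_integral_cong_AE AE_completion)
    then show ?case by (simp add: nn_integral_completion)
  qed
  moreover have "(\<integral>\<^sup>+x. f x \<partial>completion ?B) = (\<integral>\<^sup>+x. g x \<partial>?B)"
    using nn_integral_cong_AE[OF AE_completion[OF ae]] by (simp only: nn_integral_completion)
  ultimately show ?thesis
    using that g measurable_cong_sets[OF sB refl] by blast
qed

lemma nn_integral_mu_measurable:
  fixes f :: "'a \<Rightarrow> ennreal"
  assumes W: "W \<in> UU X0" and M: "fin_borel M"
    and f: "\<And>M. fin_borel M \<Longrightarrow> f \<in> borel_measurable (completion M)"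
  shows "(\<lambda>y. \<integral>\<^sup>+x. f x \<partial>completion (mu y W)) \<in> borel_measurable (completion M)"
proof -
  obtain g where gb: "g \<in> borel_measurable borel"
    and ae: "AE y in completion M. (\<integral>\<^sup>+x. f x \<partial>completion (mu y W)) = (\<integral>\<^sup>+x. g x \<partial>mu y W)"
    using nn_integral_completion_mu_borel_AE[OF W M f[OF fin_borel_bind_mu[OF W M]]] by blast
  have "(\<lambda>(y::'a, x). g x) \<in> borel_measurable (completion M \<Otimes>\<^sub>M borel)"
    using measurable_compose[OF measurable_snd gb] by (simp add: case_prod_beta')
  then have "(\<lambda>y. \<integral>\<^sup>+x. g x \<partial>mu y W) \<in> borel_measurable (completion M)"
    by (rule nn_integral_measurable_subprob_algebra2[OF _ mu_measurable[OF W M]])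
  then show ?thesis by (rule completion.borel_measurable_AE_eq) (rule ae)
qed

lemma nn_integral_mu_iterate:
  fixes f :: "'a \<Rightarrow> ennreal"
  assumes W: "W \<in> UU X0" and V: "V \<in> UU X0" and VW: "V \<subseteq> W"
    and f: "\<And>M. fin_borel M \<Longrightarrow> f \<in> borel_measurable (completion M)"
  shows "(\<integral>\<^sup>+y. (\<integral>\<^sup>+x. f x \<partial>completion (mu y W)) \<partial>completion (mu z V))
       = (\<integral>\<^sup>+x. f x \<partial>completion (mu z W))"
proof -
  have M: "fin_borel (mu z V)" by (rule fin_borel_mu[OF V])
  note B = bind_mu[OF W V VW, of z]
  have "f \<in> borel_measurable (completion (bind (completion (mu z V)) (\<lambda>y. mu y W)))"
    unfolding B by (rule f[OF fin_borel_mu[OF W]])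
  then obtain g where gb: "g \<in> borel_measurable borel"
    and ae: "AE y in completion (mu z V).
      (\<integral>\<^sup>+x. f x \<partial>completion (mu y W)) = (\<integral>\<^sup>+x. g x \<partial>mu y W)"
    and eq: "(\<integral>\<^sup>+x. f x \<partial>completion (bind (completion (mu z V)) (\<lambda>y. mu y W)))
      = (\<integral>\<^sup>+x. g x \<partial>bind (completion (mu z V)) (\<lambda>y. mu y W))"
    by (rule nn_integral_completion_mu_borel_AE[OF W M])
  have "(\<integral>\<^sup>+y. (\<integral>\<^sup>+x. f x \<partial>completion (mu y W)) \<partial>completion (mu z V))
      = (\<integral>\<^sup>+y. (\<integral>\<^sup>+x. g x \<partial>mu y W) \<partial>completion (mu z V))"
    by (rule nn_integral_cong_AE[OF ae])
  also have "\<dots> = (\<integral>\<^sup>+x. g x \<partial>bind (completion (mu z V)) (\<lambda>y. mu y W))"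
    by (rule nn_integral_bind[OF gb mu_measurable[OF W M], symmetric])
  finally show ?thesis
    using eq unfolding B by simp
qed

lemma integrable_min_mu:
  assumes W: "W \<in> UU X0" and h: "univ_meas_fun h" and hp: "\<forall>x. 0 \<le> h x"
  shows "integrable (completion (mu x W)) (\<lambda>y. min (h y) (real n))"
proof -
  interpret finite_measure "completion (mu x W)"
    by (rule finite_measure_completion_fin_borel[OF fin_borel_mu[OF W]])
  show ?thesis
    using hp borel_measurable_min_univ_meas[OF h fin_borel_mu[OF W]]
    by (intro integrable_const_bound[where B="real n"]) auto
qed

lemma trunc_mean_le_n:
  assumes W: "W \<in> UU X0"
  shows "trunc_mean mu W h n x \<le> real n"
proof -
  interpret finite_measure "completion (mu x W)"
    by (rule finite_measure_completion_fin_borel[OF fin_borel_mu[OF W]])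
  have "trunc_mean mu W h n x \<le> (\<integral>y. real n \<partial>completion (mu x W))"
    unfolding trunc_mean_def by (rule integral_mono') auto
  also have "\<dots> \<le> real n"
    using measure_completion_mu_le_1[OF W, of x] by (simp add: mult_left_le_one_le)
  finally show ?thesis .
qed

lemma ennreal_trunc_mean:
  assumes W: "W \<in> UU X0" and h: "univ_meas_fun h" and hp: "\<forall>x. 0 \<le> h x"
  shows "ennreal (trunc_mean mu W h n x)
       = (\<integral>\<^sup>+y. ennreal (min (h y) (real n)) \<partial>completion (mu x W))"
  unfolding trunc_mean_def using hp
  by (intro nn_integral_eq_integral[symmetric] integrable_min_mu[OF W h hp]) auto

lemma univ_meas_trunc_mean:
  assumes W: "W \<in> UU X0" and h: "univ_meas_fun h" and hp: "\<forall>x. 0 \<le> h x"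
  shows "univ_meas_fun (trunc_mean mu W h n)"
  unfolding univ_meas_fun_def
proof (intro allI impI)
  fix M :: "'a measure" assume M: "fin_borel M"
  have eq: "trunc_mean mu W h n x
      = enn2real (\<integral>\<^sup>+y. ennreal (min (h y) (real n)) \<partial>completion (mu x W))" for x
    using ennreal_trunc_mean[OF W h hp, of n x, symmetric] trunc_mean_nonneg[OF hp, of mu W n x]
    by simp
  show "trunc_mean mu W h n \<in> borel_measurable (completion M)"
    unfolding eq[abs_def]
    by (rule borel_measurable_enn2real[OF nn_integral_mu_measurable[OF W M
          borel_measurable_ennreal_min_univ_meas[OF h]]])
qed

text \<open>Harmonicity of the truncation is (M1) integrated against \<open>min h n\<close>.\<close>

lemma trunc_mean_Harm_bplus:
  assumes W: "W \<in> UU X0" and h: "univ_meas_fun h" and hp: "\<forall>x. 0 \<le> h x"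
  shows "trunc_mean mu W h n \<in> Harm_bplus mu W"
proof -
  let ?g = "trunc_mean mu W h n"
  have bd: "0 \<le> ?g x" "?g x \<le> real n" for x
    using trunc_mean_nonneg[OF hp] trunc_mean_le_n[OF W] by auto
  have um: "univ_meas_fun ?g" by (rule univ_meas_trunc_mean[OF W h hp])
  have harm: "integrable (completion (mu x V)) ?g \<and> (\<integral>y. ?g y \<partial>completion (mu x V)) = ?g x"
    if V: "V \<in> UU W" and x: "x \<in> V" for V x
  proof -
    have V0: "V \<in> UU X0" using UU_trans[OF V W] .
    interpret finite_measure "completion (mu x V)"
      by (rule finite_measure_completion_fin_borel[OF fin_borel_mu[OF V0]])
    have meas: "?g \<in> borel_measurable (completion (mu x V))"
      using um fin_borel_mu[OF V0] unfolding univ_meas_fun_def by blast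
    have int: "integrable (completion (mu x V)) ?g"
      by (rule integrable_const_bound[where B="real n"]) (use bd meas in auto)
    have "ennreal (\<integral>y. ?g y \<partial>completion (mu x V)) = (\<integral>\<^sup>+y. ennreal (?g y) \<partial>completion (mu x V))"
      by (rule nn_integral_eq_integral[symmetric, OF int]) (use bd in auto)
    also have "\<dots> = (\<integral>\<^sup>+y. (\<integral>\<^sup>+z. ennreal (min (h z) (real n)) \<partial>completion (mu y W))
                    \<partial>completion (mu x V))"
      by (simp only: ennreal_trunc_mean[OF W h hp])
    also have "\<dots> = (\<integral>\<^sup>+z. ennreal (min (h z) (real n)) \<partial>completion (mu x W))"
      by (rule nn_integral_mu_iterate[OF W V0 UU_subset[OF V]
            borel_measurable_ennreal_min_univ_meas[OF h]])
    also have "\<dots> = ennreal (?g x)"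
      by (rule ennreal_trunc_mean[OF W h hp, symmetric])
    finally have "(\<integral>y. ?g y \<partial>completion (mu x V)) = ?g x"
      using bd(1) by (simp add: Bochner_Integration.integral_nonneg)
    with int show ?thesis by blast
  qed
  have "bounded (range ?g)"
    unfolding bounded_iff using bd by (intro exI[of _ "real n"]) auto
  then show ?thesis
    unfolding Harm_bplus_def Harm_plus_def Harm_def using um harm bd by blast
qed

lemma trunc_mean_tendsto:
  assumes W: "W \<in> UU X0" and h: "univ_meas_fun h" and hp: "\<forall>x. 0 \<le> h x"
    and int: "integrable (completion (mu x W)) h"
  shows "(\<lambda>n. trunc_mean mu W h n x) \<longlonglongrightarrow> (\<integral>y. h y \<partial>completion (mu x W))"
  unfolding trunc_mean_def
proof (rule integral_dominated_convergence[where w=h])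
  show "h \<in> borel_measurable (completion (mu x W))"
    using h fin_borel_mu[OF W] unfolding univ_meas_fun_def by blast
  show "(\<lambda>y. min (h y) (real n)) \<in> borel_measurable (completion (mu x W))" for n
    by (rule borel_measurable_min_univ_meas[OF h fin_borel_mu[OF W]])
  show "AE y in completion (mu x W). (\<lambda>n. min (h y) (real n)) \<longlonglongrightarrow> h y"
  proof (rule AE_I2)
    fix y
    obtain N where "h y \<le> real N" using real_arch_simple by blast
    then have "eventually (\<lambda>n. min (h y) (real n) = h y) sequentially"
      unfolding eventually_sequentially by (intro exI[of _ N]) auto
    then show "(\<lambda>n. min (h y) (real n)) \<longlonglongrightarrow> h y" by (rule tendsto_eventually)
  qed
  show "AE y in completion (mu x W). norm (min (h y) (real n)) \<le> h y" for n
    using hp by (intro AE_I2) auto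
qed (rule int)

lemma trunc_mean_outside:
  assumes W: "W \<in> UU X0" and h: "univ_meas_fun h" and x: "x \<notin> W"
  shows "trunc_mean mu W h n x = min (h x) (real n)"
proof -
  let ?f = "\<lambda>y. min (h y) (real n)"
  have R: "mu x W = return borel x" by (rule mu_outside[OF W x])
  have fm: "?f \<in> borel_measurable (completion (return borel x))"
    using borel_measurable_min_univ_meas[OF h fin_borel_mu[OF W], of n x] R by simp
  obtain g where g: "g \<in> borel_measurable (return borel x)"
    and ae: "AE y in return borel x. ?f y = g y"
    using completion_ex_borel_measurable_real[OF fm] by blast
  obtain N where N: "{y \<in> space (return borel x). ?f y \<noteq> g y} \<subseteq> N"
      "emeasure (return borel x) N = 0" "N \<in> sets (return borel x)"
    by (rule AE_E[OF ae])
  then have "x \<notin> N" by (simp add: indicator_def split: if_splits)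
  then have "?f x = g x" using N(1) by auto
  have "trunc_mean mu W h n x = (\<integral>y. ?f y \<partial>completion (return borel x))"
    unfolding trunc_mean_def R ..
  also have "\<dots> = (\<integral>y. g y \<partial>return borel x)"
    using integral_cong_AE[OF fm measurable_completion[OF g] AE_completion[OF ae]]
    by (simp add: integral_completion[OF g])
  also have "\<dots> = g x"
    by (rule integral_return) (use g in auto)
  finally show ?thesis using \<open>?f x = g x\<close> by simp
qed

lemma trunc_mean_tendsto_Harm_plus:
  assumes h: "h \<in> Harm_plus mu U" and WU: "W \<in> UU U" and W: "W \<in> UU X0" and x: "x \<in> W"
  shows "(\<lambda>n. trunc_mean mu W h n x) \<longlonglongrightarrow> h x"
  using trunc_mean_tendsto[OF W Harm_plusD[OF h] Harm_plus_mean(1)[OF h WU x]]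
  unfolding Harm_plus_mean(2)[OF h WU x] .

lemma trunc_mean_le_Harm_plus:
  assumes h: "h \<in> Harm_plus mu U" and WU: "W \<in> UU U" and W: "W \<in> UU X0"
  shows "trunc_mean mu W h n x \<le> h x"
proof (cases "x \<in> W")
  case True
  show ?thesis
    using trunc_mean_le[of mu x W h, OF Harm_plus_mean(1)[OF h WU True] Harm_plusD(2)[OF h]]
    unfolding Harm_plus_mean(2)[OF h WU True] .
next
  case False
  then show ?thesis
    using trunc_mean_outside[OF W Harm_plusD(1)[OF h] False] by simp
qed

lemma Harm_plus_diff_trunc_mean:
  assumes h: "h \<in> Harm_plus mu U" and WU: "W \<in> UU U" and W: "W \<in> UU X0"
  shows "(\<lambda>y. h y - trunc_mean mu W h n y) \<in> Harm_plus mu W"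
proof -
  have "h \<in> Harm mu W"
    using h Harm_mono[OF UU_subset[OF WU]] unfolding Harm_plus_def by blast
  moreover have "trunc_mean mu W h n \<in> Harm mu W"
    using trunc_mean_Harm_bplus[OF W Harm_plusD[OF h]] unfolding Harm_bplus_def Harm_plus_def
    by blast
  ultimately show ?thesis
    using Harm_diff trunc_mean_le_Harm_plus[OF h WU W] unfolding Harm_plus_def by fastforce
qed

text \<open>
  Every pair of points of \<open>B(x\<^sub>0, \<alpha>R)\<close> already lies in some \<open>B(x\<^sub>0, \<alpha>R')\<close> with
  \<open>R' < R\<close>, and on \<open>W = B(x\<^sub>0, R')\<close> the truncations of \<open>h\<close> are bounded and harmonic.
\<close>

lemma harnack_Harm_plus:
  assumes \<alpha>: "0 < \<alpha>" "\<alpha> < 1" and K: "0 < K"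
    and harnack_bounded: "\<forall>x0 R h. x0 \<in> X0 \<longrightarrow> 0 < R \<longrightarrow> ereal R < R0 X0 x0 \<longrightarrow>
            h \<in> Harm_bplus mu (ball x0 R) \<longrightarrow> harnack \<alpha> K h x0 R"
    and x0: "x0 \<in> X0" and RR: "ereal R < R0 X0 x0" and h: "h \<in> Harm_plus mu (ball x0 R)"
  shows "harnack \<alpha> K h x0 R"
  unfolding harnack_iff[OF K]
proof (intro ballI)
  fix y z assume y: "y \<in> ball x0 (\<alpha> * R)" and z: "z \<in> ball x0 (\<alpha> * R)"
  obtain r where r: "R < r" "closure (ball x0 r) \<subseteq> X0" using R0_gtE[OF RR] .
  define d where "d = max (dist x0 y) (dist x0 z)"
  define q where "q = d / \<alpha>"
  define R' where "R' = (R + q) / 2"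
  have "d < \<alpha> * R" using y z unfolding d_def by auto
  then have "q < R" using \<alpha> unfolding q_def by (simp add: divide_less_eq mult.commute)
  then have "q < R'" "R' < R" unfolding R'_def by auto
  moreover have "0 \<le> q" using \<alpha> unfolding q_def d_def by (simp add: le_max_iff_disj)
  ultimately have R': "0 < R'" "d < \<alpha> * R'" "R' < R"
    using \<alpha> unfolding q_def by (auto simp: divide_less_eq mult.commute intro: le_less_trans)
  define W where "W = ball x0 R'"
  have "cball x0 R' \<subseteq> closure (ball x0 r)"
    using R'(3) r(1) closure_subset[of "ball x0 r"] by auto
  then have W0: "W \<in> UU X0" unfolding W_def using r(2) by (intro ball_in_UU) auto
  have WR: "W \<in> UU (ball x0 R)" unfolding W_def using R'(3) by (intro ball_in_UU) auto
  have yz: "y \<in> ball x0 (\<alpha> * R')" "z \<in> ball x0 (\<alpha> * R')"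
    using R'(2) unfolding d_def by auto
  moreover have "\<alpha> * R' < R'" using \<alpha> R'(1) by simp
  ultimately have "y \<in> W" "z \<in> W" unfolding W_def by auto
  have "ereal R' < R0 X0 x0" using R'(3) RR by (meson ereal_less_eq(3) le_less order.strict_trans1)
  then have "harnack \<alpha> K (trunc_mean mu W h n) x0 R'" for n
    using harnack_bounded x0 R'(1) trunc_mean_Harm_bplus[OF W0 Harm_plusD[OF h], of n]
    unfolding W_def by blast
  then have "trunc_mean mu W h n y \<le> K * trunc_mean mu W h n z" for n
    using yz unfolding harnack_iff[OF K] by blast
  moreover have "(\<lambda>n. K * trunc_mean mu W h n z) \<longlonglongrightarrow> K * h z"
    by (intro tendsto_mult_left trunc_mean_tendsto_Harm_plus[OF h WR W0 \<open>z \<in> W\<close>])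
  ultimately show "h y \<le> K * h z"
    using LIMSEQ_le[OF trunc_mean_tendsto_Harm_plus[OF h WR W0 \<open>y \<in> W\<close>]] by blast
qed

lemma continuous_on_Harm_plus:
  assumes \<alpha>: "0 < \<alpha>" "\<alpha> < 1" and K: "0 < K"
    and harnack_nonneg: "\<forall>x0 R h. x0 \<in> X0 \<longrightarrow> 0 < R \<longrightarrow> ereal R < R0 X0 x0 \<longrightarrow>
            h \<in> Harm_plus mu (ball x0 R) \<longrightarrow> harnack \<alpha> K h x0 R"
    and continuous_bounded: "\<forall>U \<in> UU X0. \<forall>h \<in> Harm_bplus mu U. continuous_on U h"
    and U: "U \<in> UU X0" and h: "h \<in> Harm_plus mu U"
  shows "continuous_on U h"
proof -
  have "open U" "U \<subseteq> X0" using U closure_subset[of U] unfolding UU_def by auto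
  have "isCont h x" if xU: "x \<in> U" for x
  proof -
    obtain e where e: "0 < e" "cball x e \<subseteq> U" using \<open>open U\<close> xU open_contains_cball by blast
    define r where "r = e / 2"
    define W where "W = ball x r"
    define g where "g n = trunc_mean mu W h n" for n
    have r: "0 < r" "r < e" using e unfolding r_def by auto
    have WU: "W \<in> UU U" unfolding W_def using r e by (intro ball_in_UU) auto
    have W0: "W \<in> UU X0" by (rule UU_trans[OF WU U])
    have "closure (ball x e) \<subseteq> X0"
      using closure_minimal[OF ball_subset_cball closed_cball, of x e] e(2) \<open>U \<subseteq> X0\<close> by blast
    then have "ereal e \<le> R0 X0 x" by (rule R0_ge[OF e(1)])
    have Rx: "ereal r < R0 X0 x"
      by (rule less_le_trans[OF _ \<open>ereal e \<le> R0 X0 x\<close>]) (use r(2) in simp)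
    have xW: "x \<in> W" unfolding W_def using r by simp
    have g: "g n \<in> Harm_bplus mu W" for n
      unfolding g_def by (rule trunc_mean_Harm_bplus[OF W0 Harm_plusD[OF h]])
    have "harnack \<alpha> K (\<lambda>y. h y - g n y) x r" for n
      using harnack_nonneg xU \<open>U \<subseteq> X0\<close> r(1) Rx Harm_plus_diff_trunc_mean[OF h WU W0]
      unfolding g_def W_def by blast
    then have gap: "h y - g n y \<le> K * (h x - g n x)" if "y \<in> ball x (\<alpha> * r)" for y n
      using that \<alpha> r(1) unfolding harnack_iff[OF K] by simp
    have "(\<lambda>n. K * (h x - g n x)) \<longlonglongrightarrow> K * (h x - h x)"
      unfolding g_def by (intro tendsto_intros trunc_mean_tendsto_Harm_plus[OF h WU W0 xW])
    then have "uniform_limit (ball x (\<alpha> * r)) g h sequentially"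
      using gap trunc_mean_le_Harm_plus[OF h WU W0]
      by (intro uniform_limitI_dist_le[where b="\<lambda>n. K * (h x - g n x)"])
         (auto simp: g_def dist_real_def)
    moreover have "continuous_on (ball x (\<alpha> * r)) (g n)" for n
    proof (rule continuous_on_subset)
      show "continuous_on W (g n)" using continuous_bounded W0 g by blast
      show "ball x (\<alpha> * r) \<subseteq> W" unfolding W_def using \<alpha> r(1) by (intro subset_ball) simp
    qed
    ultimately have "continuous_on (ball x (\<alpha> * r)) h"
      by (intro uniform_limit_theorem[of _ g]) auto
    then show "isCont h x"
      using \<alpha> r(1) by (simp add: continuous_on_eq_continuous_at)
  qed
  then show ?thesis
    using \<open>open U\<close> by (simp add: continuous_on_eq_continuous_at)
qed

end

theorem proposition3p1:
  fixes mu :: "'a::metric_space \<Rightarrow> 'a set \<Rightarrow> 'a measure"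
    and X0 :: "'a set" and \<alpha> K :: real
  assumes "separable_space (euclidean :: 'a topology)"
    and "open X0"
    and "kernel_family X0 mu"
    and "0 < \<alpha>" and "\<alpha> < 1" and "1 \<le> K"
    and "\<forall>x0 R h. x0 \<in> X0 \<longrightarrow> 0 < R \<longrightarrow> ereal R < R0 X0 x0 \<longrightarrow>
            h \<in> Harm_bplus mu (ball x0 R) \<longrightarrow> harnack \<alpha> K h x0 R"
  shows "(\<forall>x0 R h. x0 \<in> X0 \<longrightarrow> 0 < R \<longrightarrow> ereal R < R0 X0 x0 \<longrightarrow>
            h \<in> Harm_plus mu (ball x0 R) \<longrightarrow> harnack \<alpha> K h x0 R)
       \<and> ((\<forall>U \<in> UU X0. \<forall>h \<in> Harm_bplus mu U. continuous_on U h) \<longrightarrow>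
          (\<forall>U \<in> UU X0. \<forall>h \<in> Harm_plus mu U. continuous_on U h))"
proof -
  interpret harmonic_space X0 mu by unfold_locales fact
  have K: "0 < K" using \<open>1 \<le> K\<close> by simp
  have part1: "\<forall>x0 R h. x0 \<in> X0 \<longrightarrow> 0 < R \<longrightarrow> ereal R < R0 X0 x0 \<longrightarrow>
      h \<in> Harm_plus mu (ball x0 R) \<longrightarrow> harnack \<alpha> K h x0 R"
    using harnack_Harm_plus[OF \<open>0 < \<alpha>\<close> \<open>\<alpha> < 1\<close> K assms(7)] by blast
  moreover have "(\<forall>U \<in> UU X0. \<forall>h \<in> Harm_bplus mu U. continuous_on U h) \<longrightarrow>
      (\<forall>U \<in> UU X0. \<forall>h \<in> Harm_plus mu U. continuous_on U h)"
    using continuous_on_Harm_plus[OF \<open>0 < \<alpha>\<close> \<open>\<alpha> < 1\<close> K part1] by blast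
  ultimately show ?thesis ..
qed

end
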